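(* Let $R(u,s)=\sqrt{u^3/3+u^2+s}$, $\rho(s)=\dfrac{5}{3s(3s+4)}$, $$P(u,s)=\tfrac{2}{15}\Bigl[u(2-u)(3+u)^2+6s(1+u)\Bigr],\qquad Q(u,s)=\rho(s)\frac{P(u,s)}{R(u,s)}.$$ Then, wherever $s\notin\{0,-4/3\}$ and $R(u,s)\neq0$ (with the same branch of $R$ used in $Q$ and on the right side), $$\frac{\partial Q}{\partial u}=\frac{1}{R(u,s)^3}-\rho(s)R(u,s).$$ Consequently, if $\mathcal{C}$ is a closed piecewise smooth curve and $s$ ranges over an open set on which no root of $u^3/3+u^2+s$ meets $\mathcal{C}$ and $R(\cdot,s)$ has a single-valued continuous branch along $\mathcal{C}$ depending analytically on $s$, then with $$J(s)=\oint_{\mathcal{C}}R(v,s)\,dv,\qquad L(s)=\oint_{\mathcal{C}}\frac{dv}{R(v,s)}$$ we have $$\frac{dJ}{ds}=\frac12 L(s),\qquad \frac{dL}{ds}=-\oint_{\mathcal{C}}\frac{dv}{2R(v,s)^3}=-\frac12\rho(s)J(s).$$ *)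

theory Defs
  imports "HOL-Analysis.Analysis"
begin

definition Rsq :: "complex \<Rightarrow> complex \<Rightarrow> complex" where
  "Rsq u s = u^3/3 + u^2 + s"

definition rho :: "complex \<Rightarrow> complex" where
  "rho s = 5 / (3 * s * (3 * s + 4))"

definition Ppoly :: "complex \<Rightarrow> complex \<Rightarrow> complex" where
  "Ppoly u s = 2/15 * (u * (2 - u) * (3 + u)^2 + 6 * s * (1 + u))"

text \<open>Integral along the path g of a quantity F given as a function of the
  path parameter t (a branch "along the curve"); this is the unfolding of
  contour_integral with F t in place of f (g t).\<close>
definition pint :: "(real \<Rightarrow> complex) \<Rightarrow> (real \<Rightarrow> complex) \<Rightarrow> complex" where
  "pint g F = integral {0..1} (\<lambda>t. F t * vector_derivative g (at t within {0..1}))"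

end

theory Submission
  imports Defs "HOL-Complex_Analysis.Complex_Analysis"
begin

(*
  Differentiating rho P / R with R' = (u^2 + 2u) / (2R) and R^2 = u^3/3 + u^2 + s reduces the
  formula for dQ/du to a polynomial identity.

  For the contour integrals fix s0 in S.  By compactness the curve splits into finitely many
  pieces, the k-th lying in a disc U_k on which, for s near s0, the given branch R(., s) is the
  explicit holomorphic root c_k * csqrt (R^2 / c_k^2) with c_k the value of the branch at the
  start of the piece: two continuous square roots of a nonvanishing function on a connected set
  agree everywhere once they agree at one point.  On a disc the integrand has a primitive, so
  each piece of the curve may be replaced by the straight segment between its endpoints, and
  along a segment we can differentiate under the integral sign using dR/ds = 1/(2R).  Finally
  Q is a primitive of 1/R^3 - rho R on each disc, so around the closed curve the pieces
  telescope to zero, i.e. the integral of dv/R^3 is rho times the integral of R dv.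
*)

section \<open>Square roots\<close>

text \<open>The branch of the square root on the half-plane \<open>Re (w / c\<^sup>2) > 0\<close> that takes the value
  \<open>c\<close> at \<open>c\<^sup>2\<close>.\<close>
definition csqrt_near :: "complex \<Rightarrow> complex \<Rightarrow> complex" where
  "csqrt_near c w = c * csqrt (w / c^2)"

lemma open_Re_div_pos: "open {w. 0 < Re (w / c)}"
  unfolding divide_inverse by (intro open_Collect_less continuous_intros)

lemma csqrt_near_square: "0 < Re (w / c^2) \<Longrightarrow> (csqrt_near c w)^2 = w"
  by (cases "c = 0") (simp_all add: csqrt_near_def power_mult_distrib)

lemma csqrt_near_nonzero: "0 < Re (w / c^2) \<Longrightarrow> csqrt_near c w \<noteq> 0"
  by (auto simp: csqrt_near_def)

lemma csqrt_near_of_square: "c \<noteq> 0 \<Longrightarrow> csqrt_near c (c^2) = c"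
  by (simp add: csqrt_near_def)

lemma has_field_derivative_csqrt_near:
  assumes "0 < Re (w / c^2)"
  shows "(csqrt_near c has_field_derivative 1 / (2 * csqrt_near c w)) (at w)"
proof -
  have c: "c \<noteq> 0" using assms by auto
  have "w / c^2 \<notin> \<real>\<^sub>\<le>\<^sub>0" using assms by (auto simp: complex_nonpos_Reals_iff)
  moreover have "csqrt (w / c^2) \<noteq> 0" using assms by auto
  ultimately show ?thesis using c unfolding csqrt_near_def
    by (auto intro!: derivative_eq_intros simp: field_simps power2_eq_square power4_eq_xxxx)
qed

lemma holomorphic_on_csqrt_near: "csqrt_near c holomorphic_on {w. 0 < Re (w / c^2)}"
  using has_field_derivative_csqrt_near by (auto simp: holomorphic_on_open open_Re_div_pos)

lemma continuous_on_csqrt_near_comp: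
  assumes "continuous_on A h" "\<And>x. x \<in> A \<Longrightarrow> 0 < Re (h x / c^2)"
  shows "continuous_on A (\<lambda>x. csqrt_near c (h x))"
  using continuous_on_compose2[OF holomorphic_on_imp_continuous_on[OF holomorphic_on_csqrt_near] assms(1)]
    assms(2) by blast

lemma Re_div_pos_of_close:
  fixes w c :: complex
  assumes "norm (w - c) < norm c"
  shows "0 < Re (w / c)"
proof -
  have c: "c \<noteq> 0" using assms by auto
  have "norm (w / c - 1) < 1"
    using assms c by (simp add: norm_divide divide_simps flip: diff_divide_distrib)
  moreover have "\<bar>Re (w / c - 1)\<bar> \<le> norm (w / c - 1)" by (rule abs_Re_le_cmod)
  ultimately show ?thesis by simp
qed

lemma continuous_sqrt_unique:
  fixes f h :: "'a::topological_space \<Rightarrow> 'b::{real_normed_field}"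
  assumes "connected T" "continuous_on T f" "continuous_on T h"
    and "\<And>x. x \<in> T \<Longrightarrow> (f x)^2 = (h x)^2" "\<And>x. x \<in> T \<Longrightarrow> f x \<noteq> 0"
    and "a \<in> T" "f a = h a" "x \<in> T"
  shows "f x = h x"
proof -
  define q where "q x = h x / f x" for x
  have "continuous_on T q" unfolding q_def using assms(2,3,5) by (intro continuous_intros) auto
  moreover have "q ` T \<subseteq> {1, -1}"
  proof
    fix y assume "y \<in> q ` T"
    then obtain x where x: "x \<in> T" "y = q x" by auto
    then have "y^2 = 1" using assms(4)[OF x(1), symmetric] assms(5)[OF x(1)] by (simp add: q_def power_divide)
    then show "y \<in> {1, -1}" by (simp add: power2_eq_1_iff)
  qed
  then have "finite (q ` T)" by (rule finite_subset) simp
  ultimately have "q constant_on T" using continuous_finite_range_constant[OF assms(1)] by blast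
  then have "q x = q a" using assms(6,8) by (auto simp: constant_on_def)
  then show ?thesis using assms(5)[OF assms(6)] assms(5)[OF assms(8)] assms(7) by (simp add: q_def)
qed

section \<open>Integrals along pieces of a path\<close>

lemma uniformly_continuous_near_compact:
  fixes f :: "'a::{real_normed_vector,heine_borel} \<Rightarrow> 'b::metric_space"
  assumes f: "continuous_on UNIV f" and K: "compact K" and e: "0 < e"
  obtains d where "0 < d" "\<And>x y. x \<in> K \<Longrightarrow> dist y x < d \<Longrightarrow> dist (f y) (f x) < e"
proof -
  obtain B where B: "\<And>x. x \<in> K \<Longrightarrow> norm x \<le> B"
    using compact_imp_bounded[OF K] unfolding bounded_iff by blast
  have "uniformly_continuous_on (cball 0 (B + 1)) f"
    using f by (intro compact_uniformly_continuous compact_cball) (auto intro: continuous_on_subset)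
  then obtain d where d: "0 < d"
    "\<And>x y. x \<in> cball 0 (B + 1) \<Longrightarrow> y \<in> cball 0 (B + 1) \<Longrightarrow> dist y x < d \<Longrightarrow> dist (f y) (f x) < e"
    using e unfolding uniformly_continuous_on_def by metis
  show ?thesis
  proof (rule that[of "min d 1"])
    fix x y assume x: "x \<in> K" and y: "dist y x < min d 1"
    have "norm y \<le> norm x + dist y x"
      by (metis dist_norm norm_triangle_sub add.commute)
    then show "dist (f y) (f x) < e" using d(2)[of x y] B[OF x] y by auto
  qed (use d in auto)
qed

lemma uniform_subdivision:
  fixes g :: "real \<Rightarrow> 'a::metric_space"
  assumes g: "continuous_on {0..1} g" and e: "0 < e"
  obtains N :: nat where "0 < N"
    "\<And>k t. k < N \<Longrightarrow> t \<in> {real k / N .. real (Suc k) / N} \<Longrightarrow> dist (g t) (g (real k / N)) < e"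
proof -
  have "uniformly_continuous_on {0..1} g"
    by (rule compact_uniformly_continuous[OF g compact_Icc])
  then obtain d where d: "0 < d"
    "\<And>x y. x \<in> {0..1} \<Longrightarrow> y \<in> {0..1} \<Longrightarrow> dist y x < d \<Longrightarrow> dist (g y) (g x) < e"
    using e unfolding uniformly_continuous_on_def by metis
  obtain N :: nat where N: "0 < N" "inverse (real N) < d"
    using ex_inverse_of_nat_less[OF d(1)] by blast
  show ?thesis
  proof (rule that[OF N(1)])
    fix k t assume k: "k < N" and t: "t \<in> {real k / N .. real (Suc k) / N}"
    have "dist t (real k / N) \<le> inverse (real N)"
      using t by (simp add: dist_real_def add_divide_distrib inverse_eq_divide)
    have "real k / N \<le> t" "t \<le> real (Suc k) / N" "0 \<le> real k / N" "real (Suc k) / N \<le> 1"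
      using t k by auto
    then have "t \<in> {0..1}" "real k / N \<in> {0..1}" unfolding atLeastAtMost_iff by linarith+
    with \<open>dist t (real k / N) \<le> inverse (real N)\<close> show "dist (g t) (g (real k / N)) < e"
      using d(2)[of "real k / N" t] N by auto
  qed
qed

lemma has_integral_uniform_partition:
  fixes h :: "real \<Rightarrow> 'a::banach"
  assumes N: "0 < N" and I: "\<And>k. k < N \<Longrightarrow> (h has_integral I k) {real k / N .. real (Suc k) / N}"
  shows "(h has_integral (\<Sum>k<N. I k)) {0..1}"
proof -
  have "(h has_integral (\<Sum>k<n. I k)) {0 .. real n / N}" if "n \<le> N" for n
    using that
  proof (induction n)
    case 0
    then show ?case using has_integral_refl(2)[of h 0] by simp
  next
    case (Suc n)
    have "(h has_integral (\<Sum>k<n. I k) + I n) {0 .. real (Suc n) / N}"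
      by (rule has_integral_combine[of 0 "real n / N"]) (use Suc N I in \<open>auto simp: divide_right_mono\<close>)
    then show ?case by simp
  qed
  from this[of N] N show ?thesis by simp
qed

lemma has_integral_path_piece_linepath:
  assumes g: "valid_path g" and ab: "0 \<le> a" "a \<le> b" "b \<le> 1"
    and U: "open U" "convex U" "g ` {a..b} \<subseteq> U" and f: "f holomorphic_on U"
  shows "((\<lambda>t. f (g t) * vector_derivative g (at t within {0..1})) has_integral
           contour_integral (linepath (g a) (g b)) f) {a..b}"
proof -
  obtain \<Phi> where \<Phi>: "\<And>x. x \<in> U \<Longrightarrow> (\<Phi> has_field_derivative f x) (at x)"
    using holomorphic_convex_primitive'[OF U(2,1) f] at_within_open[OF _ U(1)] by metis
  have "g a \<in> U" "g b \<in> U" using U(3) ab by auto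
  then have "closed_segment (g a) (g b) \<subseteq> U" using U(2) by (simp add: closed_segment_subset)
  moreover have "\<And>x. x \<in> U \<Longrightarrow> (\<Phi> has_field_derivative f x) (at x within U)"
    using \<Phi> by (simp add: has_field_derivative_at_within)
  ultimately have "(f has_contour_integral (\<Phi> (g b) - \<Phi> (g a))) (linepath (g a) (g b))"
    using contour_integral_primitive[OF _ valid_path_linepath, of U \<Phi> f] by simp
  then have ci: "contour_integral (linepath (g a) (g b)) f = \<Phi> (g b) - \<Phi> (g a)"
    by (rule contour_integral_unique)
  obtain K where K: "finite K" and gc: "continuous_on {0..1} g"
    and D: "\<And>x. x \<in> {0..1} - K \<Longrightarrow> g differentiable at x"
    using g unfolding valid_path_def piecewise_C1_differentiable_on_def C1_differentiable_on_def
    by (metis differentiableI_vector)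
  have "continuous_on {a..b} (\<Phi> \<circ> g)"
  proof (rule continuous_on_compose)
    show "continuous_on {a..b} g" using gc ab by (auto intro: continuous_on_subset)
    show "continuous_on (g ` {a..b}) \<Phi>"
      using \<Phi> U(3) by (meson DERIV_isCont continuous_at_imp_continuous_on subsetD)
  qed
  then have "((\<lambda>t. f (g t) * vector_derivative g (at t within {0..1})) has_integral (\<Phi> (g b) - \<Phi> (g a))) {a..b}"
  proof (intro fundamental_theorem_of_calculus_interior_strong[OF K ab(2)])
    fix x assume x: "x \<in> {a<..<b} - K"
    then have x01: "x \<in> {0..1} - K" and "g x \<in> U" using ab U(3) by auto
    have gx: "(g has_vector_derivative vector_derivative g (at x)) (at x)"
      using D[OF x01] vector_derivative_works by blast
    have "vector_derivative g (at x within {0..1}) = vector_derivative g (at x)"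
      using x01 by (intro vector_derivative_at_within_ivl[OF gx]) auto
    then show "((\<lambda>t. \<Phi> (g t)) has_vector_derivative f (g x) * vector_derivative g (at x within {0..1})) (at x)"
      using field_vector_diff_chain_at[OF gx \<Phi>[OF \<open>g x \<in> U\<close>]] by (simp add: o_def mult.commute)
  qed (simp add: o_def)
  then show ?thesis using ci by simp
qed

lemma has_field_derivative_contour_integral_linepath:
  fixes f f' :: "complex \<Rightarrow> complex \<Rightarrow> complex"
  assumes Z: "open Z" "z0 \<in> Z"
    and f': "\<And>z v. z \<in> Z \<Longrightarrow> v \<in> closed_segment a b \<Longrightarrow> ((\<lambda>z. f z v) has_field_derivative f' z v) (at z)"
    and f: "\<And>z. z \<in> Z \<Longrightarrow> continuous_on (closed_segment a b) (f z)"
    and cont: "continuous_on (Z \<times> closed_segment a b) (\<lambda>(z, v). f' z v)"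
  shows "((\<lambda>z. contour_integral (linepath a b) (f z)) has_field_derivative
           contour_integral (linepath a b) (f' z0)) (at z0)"
proof -
  obtain e where e: "0 < e" "ball z0 e \<subseteq> Z" using Z openE by blast
  have lp: "linepath a b x \<in> closed_segment a b" if "x \<in> cbox 0 1" for x
    using that by (auto simp: linepath_in_path)
  have lpc: "continuous_on (cbox 0 1) (linepath a b)"
    using continuous_on_linepath by simp
  let ?F = "\<lambda>z x. f z (linepath a b x) * (b - a)" and ?F' = "\<lambda>z x. f' z (linepath a b x) * (b - a)"
  have "((\<lambda>z. integral (cbox 0 1) (?F z)) has_field_derivative integral (cbox 0 1) (?F' z0))
      (at z0 within ball z0 e)"
  proof (rule leibniz_rule_field_derivative)
    fix z x assume "z \<in> ball z0 e" "x \<in> cbox (0::real) 1"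
    then have "((\<lambda>z. ?F z x) has_field_derivative ?F' z x) (at z)"
      using e lp by (intro DERIV_cmult_right f') auto
    then show "((\<lambda>z. ?F z x) has_field_derivative ?F' z x) (at z within ball z0 e)"
      by (rule has_field_derivative_at_within)
  next
    fix z assume "z \<in> ball z0 e"
    then have "continuous_on (cbox 0 1) (\<lambda>x. f z (linepath a b x))"
      using e lp by (intro continuous_on_compose2[OF f lpc]) auto
    then have "continuous_on (cbox 0 1) (?F z)" by (intro continuous_intros)
    then show "?F z integrable_on cbox 0 1" by (simp add: integrable_continuous_real)
  next
    have "continuous_on (ball z0 e \<times> cbox 0 1) (\<lambda>p. (fst p, linepath a b (snd p)))"
      by (intro continuous_on_Pair continuous_on_fst continuous_on_compose2[OF lpc continuous_on_snd]) auto
    moreover have "(\<lambda>p. (fst p, linepath a b (snd p))) ` (ball z0 e \<times> cbox 0 1) \<subseteq> Z \<times> closed_segment a b"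
      using e lp by auto
    ultimately have "continuous_on (ball z0 e \<times> cbox 0 1) ((\<lambda>(z, v). f' z v) \<circ> (\<lambda>p. (fst p, linepath a b (snd p))))"
      by (intro continuous_on_compose) (auto intro: continuous_on_subset[OF cont])
    then have "continuous_on (ball z0 e \<times> cbox 0 1) (\<lambda>p. f' (fst p) (linepath a b (snd p)))"
      by (simp add: o_def)
    then show "continuous_on (ball z0 e \<times> cbox 0 1) (\<lambda>(z, x). ?F' z x)"
      unfolding split_beta by (intro continuous_on_mult continuous_on_const)
  qed (use e in auto)
  then show ?thesis
    using at_within_open[of z0 "ball z0 e"] e by (simp add: contour_integral_integral)
qed

lemma holomorphic_on_field_derivative:
  assumes A: "open A" and f': "\<And>w. w \<in> A \<Longrightarrow> (f has_field_derivative f' w) (at w)"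
  shows "f holomorphic_on A" "f' holomorphic_on A"
proof -
  show f: "f holomorphic_on A" using A f' by (auto simp: holomorphic_on_open)
  show "f' holomorphic_on A"
  proof (rule holomorphic_transform)
    show "deriv f holomorphic_on A" using f A by (rule holomorphic_deriv)
    show "deriv f w = f' w" if "w \<in> A" for w
      using f'[OF that] by (rule DERIV_imp_deriv)
  qed
qed

section \<open>The primitive of the exact form\<close>

lemma has_field_derivative_Rsq: "((\<lambda>v. Rsq v s) has_field_derivative u^2 + 2 * u) (at u)"
  unfolding Rsq_def by (auto intro!: derivative_eq_intros simp: power2_eq_square)

lemma has_field_derivative_Ppoly:
  "((\<lambda>v. Ppoly v s) has_field_derivative 2/15 * (18 - 4 * u^3 - 12 * u^2 + 6 * u + 6 * s)) (at u)"
  unfolding Ppoly_def by (auto intro!: derivative_eq_intros simp: algebra_simps power2_eq_square power3_eq_cube)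

lemma Ppoly_Rsq_identity:
  "2 * (2/15 * (18 - 4 * u^3 - 12 * u^2 + 6 * u + 6 * s)) * Rsq u s - Ppoly u s * (u^2 + 2 * u)
     + 2 * (Rsq u s)^2 = 6 * s * (3 * s + 4) / 5"
  unfolding Ppoly_def Rsq_def
  by (simp add: field_simps power2_eq_square power3_eq_cube)

lemma rho_mult_denominator:
  assumes "s \<noteq> 0" "s \<noteq> -4/3"
  shows "rho s * (3 * s * (3 * s + 4)) = 5"
proof -
  have "3 * s + 4 \<noteq> 0"
  proof
    assume "3 * s + 4 = 0"
    then have "s = -4/3" by (simp add: field_simps add_eq_0_iff)
    with assms(2) show False ..
  qed
  then have "3 * s * (3 * s + 4) \<noteq> 0" using assms(1) by simp
  moreover have "\<And>D :: complex. D \<noteq> 0 \<Longrightarrow> 5 / D * D = 5" by simp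
  ultimately show ?thesis unfolding rho_def by blast
qed

lemma has_field_derivative_rho_Ppoly_div_sqrt:
  fixes r :: "complex \<Rightarrow> complex"
  assumes s: "s \<noteq> 0" "s \<noteq> -4/3" and A: "open A" "u \<in> A" and r: "r holomorphic_on A"
    and r_sq: "\<And>v. v \<in> A \<Longrightarrow> (r v)^2 = Rsq v s" and ru: "r u \<noteq> 0"
  shows "((\<lambda>v. rho s * Ppoly v s / r v) has_field_derivative 1 / (r u)^3 - rho s * r u) (at u)"
proof -
  let ?P' = "2/15 * (18 - 4 * u^3 - 12 * u^2 + 6 * u + 6 * s)"
  obtain r' where r': "(r has_field_derivative r') (at u)"
    using holomorphic_on_imp_differentiable_at[OF r A] field_differentiable_def by blast
  have "((\<lambda>v. Rsq v s) has_field_derivative 2 * r u * r') (at u)"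
  proof (rule has_field_derivative_transform_within_open[OF _ A])
    show "((\<lambda>v. (r v)^2) has_field_derivative 2 * r u * r') (at u)"
      using r' by (auto intro!: derivative_eq_intros)
  qed (simp add: r_sq)
  then have r'_eq: "r' = (u^2 + 2 * u) / (2 * r u)"
    using DERIV_unique[OF _ has_field_derivative_Rsq] ru by (simp add: field_simps)
  have "rho s * (6 * s * (3 * s + 4) / 5) = 2/5 * (rho s * (3 * s * (3 * s + 4)))"
    by (simp add: field_simps)
  then have rho: "rho s * (6 * s * (3 * s + 4) / 5) = 2" by (simp add: rho_mult_denominator[OF s])
  have quotient: "(x * a * R - x * b * (D / (2 * R))) / R^2 = x * (2 * a * R^2 - b * D) / (2 * R^3)"
    if "R \<noteq> 0" for x a b D R :: complex
    using that by (simp add: field_simps power2_eq_square power3_eq_cube)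
  have cancel: "x * (C - 2 * W^2) / (2 * R^3) = 1 / R^3 - x * R"
    if "R \<noteq> 0" "x * C = 2" "W = R^2" for x C W R :: complex
    using that by (simp add: field_simps power2_eq_square power3_eq_cube)
  have deriv: "((\<lambda>v. rho s * Ppoly v s / r v) has_field_derivative
      (rho s * ?P' * r u - rho s * Ppoly u s * r') / (r u)^2) (at u)"
    using has_field_derivative_Ppoly r' ru by (auto intro!: derivative_eq_intros simp: power2_eq_square)
  have "(rho s * ?P' * r u - rho s * Ppoly u s * r') / (r u)^2
      = rho s * (2 * ?P' * (r u)^2 - Ppoly u s * (u^2 + 2 * u)) / (2 * (r u)^3)"
    unfolding r'_eq by (rule quotient[OF ru])
  also have "\<dots> = rho s * (6 * s * (3 * s + 4) / 5 - 2 * (Rsq u s)^2) / (2 * (r u)^3)"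
    unfolding r_sq[OF A(2)] using Ppoly_Rsq_identity[of u s] by (simp add: eq_diff_eq)
  also have "\<dots> = 1 / (r u)^3 - rho s * r u"
    using cancel[OF ru rho r_sq[OF A(2), symmetric]] .
  finally show ?thesis using deriv by simp
qed

section \<open>Local charts for the branch\<close>

lemma Re_Rsq_div_pos_of_close:
  fixes v w z s c :: complex
  assumes c: "c^2 = Rsq w s"
    and close: "norm (v^3/3 + v^2 - (w^3/3 + w^2)) + norm (z - s) < norm (c^2)"
  shows "0 < Re (Rsq v z / c^2)"
proof (rule Re_div_pos_of_close)
  have "Rsq v z - c^2 = (v^3/3 + v^2 - (w^3/3 + w^2)) + (z - s)"
    unfolding c Rsq_def by simp
  then have "norm (Rsq v z - c^2) \<le> norm (v^3/3 + v^2 - (w^3/3 + w^2)) + norm (z - s)"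
    by (simp only: norm_triangle_ineq)
  with close show "norm (Rsq v z - c^2) < norm (c^2)" by linarith
qed

locale branch_family =
  fixes g :: "real \<Rightarrow> complex" and S :: "complex set" and Rb :: "complex \<Rightarrow> real \<Rightarrow> complex"
  assumes valid_path: "valid_path g" and open_S: "open S"
    and Rsq_nonzero: "\<And>s t. s \<in> S \<Longrightarrow> t \<in> {0..1} \<Longrightarrow> Rsq (g t) s \<noteq> 0"
    and Rb_square: "\<And>s t. s \<in> S \<Longrightarrow> t \<in> {0..1} \<Longrightarrow> (Rb s t)^2 = Rsq (g t) s"
    and Rb_continuous: "\<And>s. s \<in> S \<Longrightarrow> continuous_on {0..1} (Rb s)"
    and Rb_holomorphic: "\<And>t. t \<in> {0..1} \<Longrightarrow> (\<lambda>s. Rb s t) holomorphic_on S"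
begin

lemma Rb_nonzero: "s \<in> S \<Longrightarrow> t \<in> {0..1} \<Longrightarrow> Rb s t \<noteq> 0"
  using Rsq_nonzero[of s t] Rb_square[of s t] by auto

lemma continuous_on_path: "continuous_on {0..1} g"
  using valid_path valid_path_imp_path path_def by blast

lemma Rsq_bounded_below:
  assumes s: "s \<in> S"
  obtains m where "0 < m" "\<And>t. t \<in> {0..1} \<Longrightarrow> m \<le> norm (Rsq (g t) s)"
proof -
  have "continuous_on {0..1} (\<lambda>t. norm (Rsq (g t) s))"
    unfolding Rsq_def by (intro continuous_intros continuous_on_path) auto
  moreover have "{0..1::real} \<noteq> {}" by simp
  ultimately obtain t0 where t0: "t0 \<in> {0..1}" "\<And>t. t \<in> {0..1} \<Longrightarrow> norm (Rsq (g t0) s) \<le> norm (Rsq (g t) s)"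
    using continuous_attains_inf[OF compact_Icc] by meson
  show ?thesis
  proof (rule that)
    show "0 < norm (Rsq (g t0) s)" using Rsq_nonzero[OF s t0(1)] by simp
  qed (rule t0(2))
qed

lemma Rb_eq_csqrt_near:
  assumes T: "connected T" "T \<subseteq> {0..1}" "t0 \<in> T" and Z: "connected Z" "Z \<subseteq> S" "s0 \<in> Z"
    and Re: "\<And>z t. z \<in> Z \<Longrightarrow> t \<in> T \<Longrightarrow> 0 < Re (Rsq (g t) z / (Rb s0 t0)^2)"
    and z: "z \<in> Z" and t: "t \<in> T"
  shows "Rb z t = csqrt_near (Rb s0 t0) (Rsq (g t) z)"
proof -
  define c where "c = Rb s0 t0"
  have c: "c \<noteq> 0" unfolding c_def using T Z by (intro Rb_nonzero) auto
  have gT: "continuous_on T g" using continuous_on_path T(2) by (rule continuous_on_subset)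
  have along_curve: "Rb s0 t' = csqrt_near c (Rsq (g t') s0)" if "t' \<in> T" for t'
  proof (rule continuous_sqrt_unique[OF T(1) _ _ _ _ T(3) _ that])
    show "continuous_on T (Rb s0)" using Rb_continuous Z T(2) continuous_on_subset by blast
    have "continuous_on T (\<lambda>t. Rsq (g t) s0)" unfolding Rsq_def by (intro continuous_intros gT) auto
    then show "continuous_on T (\<lambda>t. csqrt_near c (Rsq (g t) s0))"
      by (rule continuous_on_csqrt_near_comp) (use Re Z in \<open>auto simp: c_def\<close>)
    show "(Rb s0 x)^2 = (csqrt_near c (Rsq (g x) s0))^2" if "x \<in> T" for x
    proof -
      have "x \<in> {0..1}" "s0 \<in> S" using that T Z by auto
      then show ?thesis
        using Rb_square csqrt_near_square[OF Re[OF Z(3) that]] by (simp add: c_def)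
    qed
    show "Rb s0 x \<noteq> 0" if "x \<in> T" for x using that T Z by (intro Rb_nonzero) auto
    have "Rsq (g t0) s0 = c^2" unfolding c_def using T Z by (intro Rb_square[symmetric]) auto
    then show "Rb s0 t0 = csqrt_near c (Rsq (g t0) s0)" using c by (simp add: csqrt_near_of_square c_def)
  qed
  show ?thesis unfolding c_def[symmetric]
  proof (rule continuous_sqrt_unique[OF Z(1) _ _ _ _ Z(3) _ z])
    show "continuous_on Z (\<lambda>z. Rb z t)"
      using Rb_holomorphic[of t] T(2) t Z(2)
      by (meson holomorphic_on_imp_continuous_on holomorphic_on_subset subsetD)
    have "continuous_on Z (\<lambda>z. Rsq (g t) z)" unfolding Rsq_def by (intro continuous_intros) auto
    then show "continuous_on Z (\<lambda>z. csqrt_near c (Rsq (g t) z))"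
      by (rule continuous_on_csqrt_near_comp) (use Re t in \<open>auto simp: c_def\<close>)
    show "(Rb x t)^2 = (csqrt_near c (Rsq (g t) x))^2" if "x \<in> Z" for x
    proof -
      have "t \<in> {0..1}" "x \<in> S" using that t T Z by auto
      then show ?thesis
        using Rb_square csqrt_near_square[OF Re[OF that t]] by (simp add: c_def)
    qed
    show "Rb x t \<noteq> 0" if "x \<in> Z" for x using that t T Z by (intro Rb_nonzero) auto
    show "Rb s0 t = csqrt_near c (Rsq (g t) s0)" by (rule along_curve[OF t])
  qed
qed

end

locale branch_charts = branch_family +
  fixes s0 :: complex and \<delta> :: real and N :: nat
    and c :: "nat \<Rightarrow> complex" and U :: "nat \<Rightarrow> complex set"
  assumes \<delta>_pos: "0 < \<delta>" and N_pos: "0 < N"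
    and chart_open: "\<And>k. k < N \<Longrightarrow> open (U k)"
    and chart_convex: "\<And>k. k < N \<Longrightarrow> convex (U k)"
    and chart_covers: "\<And>k. k < N \<Longrightarrow> g ` {real k / N .. real (Suc k) / N} \<subseteq> U k"
    and chart_Re_pos: "\<And>k z v. k < N \<Longrightarrow> z \<in> ball s0 \<delta> \<Longrightarrow> v \<in> U k \<Longrightarrow> 0 < Re (Rsq v z / (c k)^2)"
    and Rb_chart: "\<And>k z t. k < N \<Longrightarrow> z \<in> ball s0 \<delta> \<Longrightarrow> t \<in> {real k / N .. real (Suc k) / N} \<Longrightarrow>
        Rb z t = csqrt_near (c k) (Rsq (g t) z)"

lemma (in branch_family) local_charts:
  assumes s0: "s0 \<in> S"
  obtains \<delta> N c U where "branch_charts g S Rb s0 \<delta> N c U"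
proof -
  obtain m where m: "0 < m" "\<And>t. t \<in> {0..1} \<Longrightarrow> m \<le> norm (Rsq (g t) s0)"
    using Rsq_bounded_below[OF s0] by blast
  obtain e where e: "0 < e" "ball s0 e \<subseteq> S" using open_S s0 openE by blast
  define cubic :: "complex \<Rightarrow> complex" where "cubic v = v^3/3 + v^2" for v
  have "continuous_on UNIV cubic" unfolding cubic_def by (intro continuous_intros) auto
  moreover have "compact (g ` {0..1})" by (intro compact_continuous_image continuous_on_path compact_Icc)
  moreover have "0 < m / 2" using m by simp
  ultimately obtain \<epsilon> where \<epsilon>: "0 < \<epsilon>"
    "\<And>x y. x \<in> g ` {0..1} \<Longrightarrow> dist y x < \<epsilon> \<Longrightarrow> dist (cubic y) (cubic x) < m / 2"
    using uniformly_continuous_near_compact by blast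
  obtain N where N: "0 < N"
    "\<And>k t. k < N \<Longrightarrow> t \<in> {real k / N .. real (Suc k) / N} \<Longrightarrow> dist (g t) (g (real k / N)) < \<epsilon>"
    using uniform_subdivision[OF continuous_on_path \<epsilon>(1)] by blast
  define \<delta> where "\<delta> = min (m / 2) e"
  define c where "c k = Rb s0 (real k / N)" for k
  define U where "U k = ball (g (real k / N)) \<epsilon>" for k
  have \<delta>: "0 < \<delta>" "ball s0 \<delta> \<subseteq> S" using m e by (auto simp: \<delta>_def)
  have node: "real k / N \<in> {real k / N .. real (Suc k) / N}" for k
    by (simp add: divide_right_mono)
  have piece01: "{real k / N .. real (Suc k) / N} \<subseteq> {0..1}" if "k < N" for k
    using that by (auto simp: field_simps)
  have covers: "g ` {real k / N .. real (Suc k) / N} \<subseteq> U k" if "k < N" for k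
    using N(2)[OF that] by (auto simp: U_def dist_commute)
  have Re_pos: "0 < Re (Rsq v z / (c k)^2)" if k: "k < N" and z: "z \<in> ball s0 \<delta>" and v: "v \<in> U k" for k z v
  proof (rule Re_Rsq_div_pos_of_close)
    have tk: "real k / N \<in> {0..1}" using piece01[OF k] node by blast
    show ck: "(c k)^2 = Rsq (g (real k / N)) s0" unfolding c_def using s0 tk by (rule Rb_square)
    have "norm (cubic v - cubic (g (real k / N))) < m / 2"
      using \<epsilon>(2)[of "g (real k / N)" v] tk v by (simp add: U_def dist_norm norm_minus_commute)
    moreover have "norm (z - s0) < m / 2" using z by (simp add: \<delta>_def dist_norm norm_minus_commute)
    moreover have "m \<le> norm ((c k)^2)" unfolding ck using m(2)[OF tk] .
    ultimately show "norm (v^3/3 + v^2 - ((g (real k / N))^3/3 + (g (real k / N))^2)) + norm (z - s0)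
        < norm ((c k)^2)"
      unfolding cubic_def by linarith
  qed
  have "branch_charts g S Rb s0 \<delta> N c U"
  proof (intro branch_charts.intro branch_family_axioms branch_charts_axioms.intro \<delta>(1) N(1) covers Re_pos)
    show "open (U k)" "convex (U k)" for k by (simp_all add: U_def)
  next
    fix k z t assume k: "k < N" and z: "z \<in> ball s0 \<delta>" and t: "t \<in> {real k / N .. real (Suc k) / N}"
    show "Rb z t = csqrt_near (c k) (Rsq (g t) z)"
      unfolding c_def
    proof (rule Rb_eq_csqrt_near[OF _ piece01[OF k] node _ \<delta>(2) _ _ z t])
      show "0 < Re (Rsq (g t') z' / (Rb s0 (real k / N))^2)"
        if "z' \<in> ball s0 \<delta>" "t' \<in> {real k / N .. real (Suc k) / N}" for z' t'
        using Re_pos[OF k that(1)] covers[OF k] that(2) unfolding c_def by blast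
    qed (use \<delta> in auto)
  qed
  then show ?thesis by (rule that)
qed

context branch_charts
begin

lemma s0_in_ball: "s0 \<in> ball s0 \<delta>"
  using \<delta>_pos by simp

lemma nodes_in_piece:
  "real k / N \<in> {real k / N .. real (Suc k) / N}" "real (Suc k) / N \<in> {real k / N .. real (Suc k) / N}"
  by (simp_all add: divide_right_mono)

lemma segment_subset_chart: "k < N \<Longrightarrow> closed_segment (g (real k / N)) (g (real (Suc k) / N)) \<subseteq> U k"
  using chart_covers chart_convex nodes_in_piece by (simp add: closed_segment_subset image_subset_iff)

lemma chart_nonzero: "k < N \<Longrightarrow> z \<in> ball s0 \<delta> \<Longrightarrow> v \<in> U k \<Longrightarrow> csqrt_near (c k) (Rsq v z) \<noteq> 0"
  by (rule csqrt_near_nonzero[OF chart_Re_pos])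

lemma chart_holomorphic:
  assumes "k < N" "z \<in> ball s0 \<delta>"
  shows "(\<lambda>v. csqrt_near (c k) (Rsq v z)) holomorphic_on U k"
proof -
  have "(\<lambda>v. Rsq v z) holomorphic_on U k" unfolding Rsq_def by (intro holomorphic_intros) auto
  moreover have "(\<lambda>v. Rsq v z) ` U k \<subseteq> {w. 0 < Re (w / (c k)^2)}" using chart_Re_pos[OF assms] by auto
  ultimately show ?thesis
    using holomorphic_on_compose_gen[OF _ holomorphic_on_csqrt_near] by (simp add: o_def)
qed

lemma holomorphic_on_chart_comp:
  assumes "k < N" "z \<in> ball s0 \<delta>" and \<phi>: "\<phi> holomorphic_on - {0}"
  shows "(\<lambda>v. \<phi> (csqrt_near (c k) (Rsq v z))) holomorphic_on U k"
proof -
  have "(\<lambda>v. csqrt_near (c k) (Rsq v z)) ` U k \<subseteq> - {0}" using chart_nonzero[OF assms(1,2)] by auto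
  then show ?thesis
    using holomorphic_on_compose_gen[OF chart_holomorphic[OF assms(1,2)] \<phi>] by (simp add: o_def)
qed

lemma continuous_on_chart_joint:
  assumes "k < N"
  shows "continuous_on (ball s0 \<delta> \<times> U k) (\<lambda>p. csqrt_near (c k) (Rsq (snd p) (fst p)))"
proof (rule continuous_on_csqrt_near_comp)
  show "continuous_on (ball s0 \<delta> \<times> U k) (\<lambda>p. Rsq (snd p) (fst p))"
    unfolding Rsq_def by (intro continuous_intros) auto
qed (use chart_Re_pos[OF assms] in auto)

definition segment_integral :: "nat \<Rightarrow> complex \<Rightarrow> (complex \<Rightarrow> complex) \<Rightarrow> complex" where
  "segment_integral k z \<phi> = contour_integral (linepath (g (real k / N)) (g (real (Suc k) / N)))
     (\<lambda>v. \<phi> (csqrt_near (c k) (Rsq v z)))"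

lemma has_integral_segment_integrals:
  assumes \<phi>: "\<phi> holomorphic_on - {0}" and z: "z \<in> ball s0 \<delta>"
  shows "((\<lambda>t. \<phi> (Rb z t) * vector_derivative g (at t within {0..1})) has_integral
           (\<Sum>k<N. segment_integral k z \<phi>)) {0..1}"
proof (rule has_integral_uniform_partition[OF N_pos])
  fix k assume k: "k < N"
  have "0 \<le> real k / N" "real k / N \<le> real (Suc k) / N" "real (Suc k) / N \<le> 1"
    using k by (simp_all add: divide_right_mono)
  from has_integral_path_piece_linepath[OF valid_path this chart_open[OF k] chart_convex[OF k]
      chart_covers[OF k] holomorphic_on_chart_comp[OF k z \<phi>]]
  have "((\<lambda>t. \<phi> (csqrt_near (c k) (Rsq (g t) z)) * vector_derivative g (at t within {0..1}))
      has_integral segment_integral k z \<phi>) {real k / N .. real (Suc k) / N}"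
    by (simp add: segment_integral_def)
  then show "((\<lambda>t. \<phi> (Rb z t) * vector_derivative g (at t within {0..1})) has_integral
      segment_integral k z \<phi>) {real k / N .. real (Suc k) / N}"
    by (rule has_integral_eq[rotated]) (simp add: Rb_chart[OF k z])
qed

lemma has_field_derivative_segment_integral:
  assumes k: "k < N" and \<phi>': "\<And>w. w \<noteq> 0 \<Longrightarrow> (\<phi> has_field_derivative \<phi>' w) (at w)"
  shows "((\<lambda>z. segment_integral k z \<phi>) has_field_derivative
           segment_integral k s0 (\<lambda>w. \<phi>' w / (2 * w))) (at s0)"
  unfolding segment_integral_def
proof (rule has_field_derivative_contour_integral_linepath[OF open_ball s0_in_ball])
  let ?R = "\<lambda>z v. csqrt_near (c k) (Rsq v z)"
  fix z v assume z: "z \<in> ball s0 \<delta>" and "v \<in> closed_segment (g (real k / N)) (g (real (Suc k) / N))"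
  then have v: "v \<in> U k" using segment_subset_chart[OF k] by blast
  have "((\<lambda>z. Rsq v z) has_field_derivative 1) (at z)"
    unfolding Rsq_def by (auto intro!: derivative_eq_intros)
  from DERIV_chain2[OF has_field_derivative_csqrt_near[OF chart_Re_pos[OF k z v]] this]
  have "((\<lambda>z. ?R z v) has_field_derivative 1 / (2 * ?R z v)) (at z)" by simp
  from DERIV_chain2[OF \<phi>'[OF chart_nonzero[OF k z v]] this]
  show "((\<lambda>z. \<phi> (?R z v)) has_field_derivative \<phi>' (?R z v) / (2 * ?R z v)) (at z)" by simp
next
  have \<phi>: "\<phi> holomorphic_on - {0}"
    using \<phi>' by (intro holomorphic_on_field_derivative(1)[of _ _ \<phi>']) (auto simp: open_Compl)
  fix z assume z: "z \<in> ball s0 \<delta>"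
  show "continuous_on (closed_segment (g (real k / N)) (g (real (Suc k) / N)))
      (\<lambda>v. \<phi> (csqrt_near (c k) (Rsq v z)))"
    by (rule continuous_on_subset[OF holomorphic_on_imp_continuous_on[OF holomorphic_on_chart_comp[OF k z \<phi>]]
          segment_subset_chart[OF k]])
next
  have "(\<lambda>w. \<phi>' w / (2 * w)) holomorphic_on - {0}"
    using holomorphic_on_field_derivative(2)[of "- {0}" \<phi> \<phi>'] \<phi>'
    by (auto intro!: holomorphic_intros simp: open_Compl)
  then have "continuous_on (- {0}) (\<lambda>w. \<phi>' w / (2 * w))" by (rule holomorphic_on_imp_continuous_on)
  then have "continuous_on (ball s0 \<delta> \<times> U k)
      (\<lambda>p. \<phi>' (csqrt_near (c k) (Rsq (snd p) (fst p))) / (2 * csqrt_near (c k) (Rsq (snd p) (fst p))))"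
    by (rule continuous_on_compose2[OF _ continuous_on_chart_joint[OF k]]) (use chart_nonzero[OF k] in auto)
  then show "continuous_on (ball s0 \<delta> \<times> closed_segment (g (real k / N)) (g (real (Suc k) / N)))
      (\<lambda>(z, v). \<phi>' (csqrt_near (c k) (Rsq v z)) / (2 * csqrt_near (c k) (Rsq v z)))"
    unfolding split_beta by (rule continuous_on_subset) (use segment_subset_chart[OF k] in auto)
qed

lemma has_field_derivative_pint_near:
  assumes \<phi>': "\<And>w. w \<noteq> 0 \<Longrightarrow> (\<phi> has_field_derivative \<phi>' w) (at w)"
  shows "((\<lambda>z. pint g (\<lambda>t. \<phi> (Rb z t))) has_field_derivative
           pint g (\<lambda>t. \<phi>' (Rb s0 t) / (2 * Rb s0 t))) (at s0)"
proof -
  have \<phi>: "\<phi> holomorphic_on - {0}"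
    using \<phi>' by (intro holomorphic_on_field_derivative(1)[of _ _ \<phi>']) (auto simp: open_Compl)
  have \<psi>: "(\<lambda>w. \<phi>' w / (2 * w)) holomorphic_on - {0}"
    using holomorphic_on_field_derivative(2)[of "- {0}" \<phi> \<phi>'] \<phi>'
    by (auto intro!: holomorphic_intros simp: open_Compl)
  have pint_sum: "pint g (\<lambda>t. f (Rb z t)) = (\<Sum>k<N. segment_integral k z f)"
    if "f holomorphic_on - {0}" "z \<in> ball s0 \<delta>" for f z
    unfolding pint_def using has_integral_segment_integrals[OF that] by (rule integral_unique)
  have "((\<lambda>z. segment_integral k z \<phi>) has_field_derivative
      segment_integral k s0 (\<lambda>w. \<phi>' w / (2 * w))) (at s0)" if "k \<in> {..<N}" for k
    using that \<phi>' by (intro has_field_derivative_segment_integral) auto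
  then have "((\<lambda>z. \<Sum>k<N. segment_integral k z \<phi>) has_field_derivative
      (\<Sum>k<N. segment_integral k s0 (\<lambda>w. \<phi>' w / (2 * w)))) (at s0)"
    by (rule DERIV_sum)
  then have "((\<lambda>z. \<Sum>k<N. segment_integral k z \<phi>) has_field_derivative
      pint g (\<lambda>t. \<phi>' (Rb s0 t) / (2 * Rb s0 t))) (at s0)"
    by (simp only: pint_sum[OF \<psi> s0_in_ball])
  then show ?thesis
    by (rule has_field_derivative_transform_within_open[OF _ open_ball s0_in_ball])
       (simp add: pint_sum[OF \<phi>])
qed

lemma has_integral_exact_form:
  assumes s0: "s0 \<noteq> 0" "s0 \<noteq> -4/3" and closed: "g 1 = g 0" "Rb s0 1 = Rb s0 0"
  shows "((\<lambda>t. (1 / (Rb s0 t)^3 - rho s0 * Rb s0 t) * vector_derivative g (at t within {0..1}))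
           has_integral 0) {0..1}"
proof -
  define Q where "Q j = rho s0 * Ppoly (g (real j / N)) s0 / Rb s0 (real j / N)" for j
  have step: "segment_integral k s0 (\<lambda>w. 1 / w^3 - rho s0 * w) = Q (Suc k) - Q k" if k: "k < N" for k
  proof -
    define r where "r v = csqrt_near (c k) (Rsq v s0)" for v
    have "((\<lambda>v. rho s0 * Ppoly v s0 / r v) has_field_derivative 1 / (r v)^3 - rho s0 * r v) (at v within U k)"
      if v: "v \<in> U k" for v
    proof (rule has_field_derivative_at_within, rule has_field_derivative_rho_Ppoly_div_sqrt[OF s0 chart_open[OF k] v])
      show "r holomorphic_on U k" unfolding r_def by (rule chart_holomorphic[OF k s0_in_ball])
      show "(r w)^2 = Rsq w s0" if "w \<in> U k" for w
        unfolding r_def by (rule csqrt_near_square[OF chart_Re_pos[OF k s0_in_ball that]])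
      show "r v \<noteq> 0" unfolding r_def by (rule chart_nonzero[OF k s0_in_ball v])
    qed
    from contour_integral_primitive[OF this valid_path_linepath] segment_subset_chart[OF k]
    have ci: "((\<lambda>v. 1 / (r v)^3 - rho s0 * r v) has_contour_integral
        rho s0 * Ppoly (g (real (Suc k) / N)) s0 / r (g (real (Suc k) / N))
        - rho s0 * Ppoly (g (real k / N)) s0 / r (g (real k / N)))
        (linepath (g (real k / N)) (g (real (Suc k) / N)))"
      by simp
    have ends: "r (g (real k / N)) = Rb s0 (real k / N)" "r (g (real (Suc k) / N)) = Rb s0 (real (Suc k) / N)"
      unfolding r_def using Rb_chart[OF k s0_in_ball nodes_in_piece(1)] Rb_chart[OF k s0_in_ball nodes_in_piece(2)]
      by simp_all
    have "((\<lambda>v. 1 / (r v)^3 - rho s0 * r v) has_contour_integral (Q (Suc k) - Q k))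
        (linepath (g (real k / N)) (g (real (Suc k) / N)))"
      using ci unfolding Q_def ends .
    then show ?thesis
      unfolding segment_integral_def r_def by (rule contour_integral_unique)
  qed
  have "(\<Sum>k<N. segment_integral k s0 (\<lambda>w. 1 / w^3 - rho s0 * w)) = (\<Sum>k<N. Q (Suc k) - Q k)"
    by (rule sum.cong) (simp_all add: step)
  also have "\<dots> = Q N - Q 0" by (rule sum_lessThan_telescope)
  also have "\<dots> = 0" using N_pos closed by (simp add: Q_def)
  finally have sum0: "(\<Sum>k<N. segment_integral k s0 (\<lambda>w. 1 / w^3 - rho s0 * w)) = 0" .
  have "(\<lambda>w. 1 / w^3 - rho s0 * w) holomorphic_on - {0}" by (auto intro!: holomorphic_intros)
  from has_integral_segment_integrals[OF this s0_in_ball] show ?thesis by (simp only: sum0)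
qed

end

section \<open>Derivatives of the periods\<close>

lemma pint_uminus: "pint g (\<lambda>t. - F t) = - pint g F"
  unfolding pint_def by simp

lemma pint_inverse_double: "pint g (\<lambda>t. 1 / (2 * F t)) = pint g (\<lambda>t. 1 / F t) / 2"
  unfolding pint_def by (simp add: mult.commute flip: integral_divide)

context branch_family
begin

lemma has_field_derivative_pint:
  assumes s: "s \<in> S" and \<phi>': "\<And>w. w \<noteq> 0 \<Longrightarrow> (\<phi> has_field_derivative \<phi>' w) (at w)"
  shows "((\<lambda>z. pint g (\<lambda>t. \<phi> (Rb z t))) has_field_derivative
           pint g (\<lambda>t. \<phi>' (Rb s t) / (2 * Rb s t))) (at s)"
proof -
  obtain \<delta> N c U where "branch_charts g S Rb s \<delta> N c U" using local_charts[OF s] .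
  then interpret branch_charts g S Rb s \<delta> N c U .
  show ?thesis using has_field_derivative_pint_near[OF \<phi>'] .
qed

lemma pint_inverse_cube:
  assumes s: "s \<in> S" "s \<noteq> 0" "s \<noteq> -4/3" and closed: "g 1 = g 0" "Rb s 1 = Rb s 0"
  shows "pint g (\<lambda>t. 1 / (Rb s t)^3) = rho s * pint g (Rb s)"
proof -
  obtain \<delta> N c U where "branch_charts g S Rb s \<delta> N c U" using local_charts[OF s(1)] .
  then interpret branch_charts g S Rb s \<delta> N c U .
  let ?dg = "\<lambda>t. vector_derivative g (at t within {0..1})"
  have "(\<lambda>w. w) holomorphic_on - {0}" by simp
  from has_integral_segment_integrals[OF this s0_in_ball]
  have J: "((\<lambda>t. Rb s t * ?dg t) has_integral pint g (Rb s)) {0..1}"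
    unfolding pint_def by (simp add: integral_unique)
  have "((\<lambda>t. (1 / (Rb s t)^3 - rho s * Rb s t) * ?dg t + rho s * (Rb s t * ?dg t)) has_integral
      0 + rho s * pint g (Rb s)) {0..1}"
    by (rule has_integral_add[OF has_integral_exact_form[OF s(2,3) closed] has_integral_mult_right[OF J]])
  then have "((\<lambda>t. 1 / (Rb s t)^3 * ?dg t) has_integral rho s * pint g (Rb s)) {0..1}"
    unfolding add_0_left by (rule has_integral_eq[rotated]) (simp add: algebra_simps)
  then show ?thesis unfolding pint_def by (rule integral_unique)
qed

lemma has_field_derivative_pint_Rb:
  assumes "s \<in> S"
  shows "((\<lambda>z. pint g (Rb z)) has_field_derivative pint g (\<lambda>t. 1 / Rb s t) / 2) (at s)"
  using has_field_derivative_pint[OF assms, of "\<lambda>w. w" "\<lambda>_. 1"] by (simp add: pint_inverse_double)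

lemma has_field_derivative_pint_inverse_Rb:
  assumes "s \<in> S"
  shows "((\<lambda>z. pint g (\<lambda>t. 1 / Rb z t)) has_field_derivative
           - pint g (\<lambda>t. 1 / (2 * (Rb s t)^3))) (at s)"
proof -
  have "((\<lambda>z. pint g (\<lambda>t. 1 / Rb z t)) has_field_derivative
      pint g (\<lambda>t. - 1 / (Rb s t)^2 / (2 * Rb s t))) (at s)"
    by (rule has_field_derivative_pint[OF assms, where \<phi>' = "\<lambda>w. - 1 / w^2"])
      (auto intro!: derivative_eq_intros simp: power2_eq_square)
  moreover have "(\<lambda>t. - 1 / (Rb s t)^2 / (2 * Rb s t)) = (\<lambda>t. - (1 / (2 * (Rb s t)^3)))"
    by (simp add: fun_eq_iff power2_eq_square power3_eq_cube)
  ultimately show ?thesis by (simp only: pint_uminus)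
qed

end

theorem proposition3:
  fixes g :: "real \<Rightarrow> complex" and S :: "complex set"
    and Rb :: "complex \<Rightarrow> real \<Rightarrow> complex"
  assumes "valid_path g" and "pathfinish g = pathstart g"
    and "open S" and "0 \<notin> S" and "-4/3 \<notin> S"
    and "\<forall>s\<in>S. \<forall>t\<in>{0..1}. Rsq (g t) s \<noteq> 0"
    and "\<forall>s\<in>S. \<forall>t\<in>{0..1}. (Rb s t)^2 = Rsq (g t) s"
    and "\<forall>s\<in>S. continuous_on {0..1} (Rb s)"
    and "\<forall>s\<in>S. Rb s 0 = Rb s 1"
    and "\<forall>t\<in>{0..1}. (\<lambda>s. Rb s t) holomorphic_on S"
  shows "(\<forall>s u A r. s \<noteq> 0 \<and> s \<noteq> -4/3 \<and> open A \<and> u \<in> A \<and> r holomorphic_on A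
            \<and> (\<forall>v\<in>A. (r v)^2 = Rsq v s) \<and> r u \<noteq> 0 \<longrightarrow>
           ((\<lambda>v. rho s * Ppoly v s / r v) has_field_derivative
              (1 / (r u)^3 - rho s * r u)) (at u))
       \<and> (\<forall>s\<in>S. ((\<lambda>z. pint g (Rb z)) has_field_derivative
              pint g (\<lambda>t. 1 / Rb s t) / 2) (at s))
       \<and> (\<forall>s\<in>S. ((\<lambda>z. pint g (\<lambda>t. 1 / Rb z t)) has_field_derivative
              - pint g (\<lambda>t. 1 / (2 * (Rb s t)^3))) (at s))
       \<and> (\<forall>s\<in>S. - pint g (\<lambda>t. 1 / (2 * (Rb s t)^3)) = - (1/2) * rho s * pint g (Rb s))"
proof -
  interpret branch_family g S Rb using assms by unfold_locales auto
  have closed: "g 1 = g 0" "\<And>s. s \<in> S \<Longrightarrow> Rb s 1 = Rb s 0"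
    using assms(2,9) by (simp_all add: pathstart_def pathfinish_def)
  show ?thesis
  proof (intro conjI allI impI ballI)
    fix s u A and r :: "complex \<Rightarrow> complex"
    assume "s \<noteq> 0 \<and> s \<noteq> -4/3 \<and> open A \<and> u \<in> A \<and> r holomorphic_on A
      \<and> (\<forall>v\<in>A. (r v)^2 = Rsq v s) \<and> r u \<noteq> 0"
    then show "((\<lambda>v. rho s * Ppoly v s / r v) has_field_derivative 1 / (r u)^3 - rho s * r u) (at u)"
      by (intro has_field_derivative_rho_Ppoly_div_sqrt) auto
  next
    fix s assume s: "s \<in> S"
    then show "((\<lambda>z. pint g (Rb z)) has_field_derivative pint g (\<lambda>t. 1 / Rb s t) / 2) (at s)"
      by (rule has_field_derivative_pint_Rb)
    show "((\<lambda>z. pint g (\<lambda>t. 1 / Rb z t)) has_field_derivative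
        - pint g (\<lambda>t. 1 / (2 * (Rb s t)^3))) (at s)"
      using s by (rule has_field_derivative_pint_inverse_Rb)
    have "s \<noteq> 0" "s \<noteq> -4/3" using s assms(4,5) by auto
    with s closed show "- pint g (\<lambda>t. 1 / (2 * (Rb s t)^3)) = - (1/2) * rho s * pint g (Rb s)"
      by (simp add: pint_inverse_double pint_inverse_cube)
  qed
qed

end
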